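(* Let $f\in C(I)$, the partition $\Delta$ and scaling functions $\alpha_{i,r}\in C(I)$ with $\|\alpha\|_\infty<1$ be fixed. Let $A$ be the set of sequences $b=\{b_r\}_{r\in\mathbb{N}}$ with $b_r\in C(I)$, $b_r(x_0)=f(x_0)$, $b_r(x_N)=f(x_N)$ for all $r$, and $\sup_r\|b_r\|_\infty<\infty$, with the metric $\|b-c\|_\infty=\sup_{r}\|b_r-c_r\|_\infty$. Then the map $\mathcal{A}:A\to C(I)$, $\mathcal{A}(b)=f^\alpha_{\Delta,b}$, is Lipschitz continuous (with respect to the supremum norm on $C(I)$).
   Context: $I=[x_0,x_N]$ with partition $\Delta: x_0<x_1<\dots<x_N$, $I_i=[x_{i-1},x_i]$, $l_i:I\to I_i$ the affine bijection $l_i(x)=\frac{x_i-x_{i-1}}{x_N-x_0}x+\frac{x_Nx_{i-1}-x_0x_i}{x_N-x_0}$, $Q_i=l_i^{-1}$. $\|\alpha\|_\infty:=\sup_r\max_i\|\alpha_{i,r}\|_\infty$. For $b\in A$, $f^\alpha_{\Delta,b}$ (the non-stationary $\alpha$-fractal function) is the uniform limit, independent of $g\in C_f(I)=\{g\in C(I):g(x_0)=f(x_0),g(x_N)=f(x_N)\}$, of $T^{\alpha_1}\circ\cdots\circ T^{\alpha_r}g$, where $(T^{\alpha_r}g)(x)=f(x)+\alpha_{i,r}(Q_i(x))(g-b_r)(Q_i(x))$ for $x\in I_i$. *)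

theory Defs
  imports "HOL-Analysis.Analysis"
begin

definition Ival :: "(nat \<Rightarrow> real) \<Rightarrow> nat \<Rightarrow> real set" where
  "Ival x N = {x 0 .. x N}"

definition is_partition :: "(nat \<Rightarrow> real) \<Rightarrow> nat \<Rightarrow> bool" where
  "is_partition x N \<longleftrightarrow> N \<ge> 1 \<and> (\<forall>i<N. x i < x (Suc i))"

text \<open>The affine map l_i : I -> I_i and its inverse Q_i.\<close>

definition lmap :: "(nat \<Rightarrow> real) \<Rightarrow> nat \<Rightarrow> nat \<Rightarrow> real \<Rightarrow> real" where
  "lmap x N i t = (x i - x (i - 1)) / (x N - x 0) * t
                 + (x N * x (i - 1) - x 0 * x i) / (x N - x 0)"

definition Qmap :: "(nat \<Rightarrow> real) \<Rightarrow> nat \<Rightarrow> nat \<Rightarrow> real \<Rightarrow> real" where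
  "Qmap x N i s = ((x N - x 0) * s - (x N * x (i - 1) - x 0 * x i)) / (x i - x (i - 1))"

text \<open>Index i (1 <= i <= N) of the subinterval I_i = [x (i-1), x i] containing t
  (the least one, for nodes; at interior nodes both choices agree on C_f).\<close>

definition sub_index :: "(nat \<Rightarrow> real) \<Rightarrow> real \<Rightarrow> nat" where
  "sub_index x t = (LEAST i. 1 \<le> i \<and> t \<le> x i)"

definition Top :: "(nat \<Rightarrow> real) \<Rightarrow> nat \<Rightarrow> (real \<Rightarrow> real) \<Rightarrow> (nat \<Rightarrow> nat \<Rightarrow> real \<Rightarrow> real)
                   \<Rightarrow> (nat \<Rightarrow> real \<Rightarrow> real) \<Rightarrow> nat \<Rightarrow> (real \<Rightarrow> real) \<Rightarrow> real \<Rightarrow> real" where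
  "Top x N f \<alpha> b r g t =
     (let i = sub_index x t; q = Qmap x N i t in f t + \<alpha> i r q * (g q - b r q))"

definition Tcomp :: "(nat \<Rightarrow> real) \<Rightarrow> nat \<Rightarrow> (real \<Rightarrow> real) \<Rightarrow> (nat \<Rightarrow> nat \<Rightarrow> real \<Rightarrow> real)
                   \<Rightarrow> (nat \<Rightarrow> real \<Rightarrow> real) \<Rightarrow> nat \<Rightarrow> (real \<Rightarrow> real) \<Rightarrow> real \<Rightarrow> real" where
  "Tcomp x N f \<alpha> b m g = foldr (\<lambda>r h. Top x N f \<alpha> b r h) [1..<Suc m] g"

definition Cf :: "(nat \<Rightarrow> real) \<Rightarrow> nat \<Rightarrow> (real \<Rightarrow> real) \<Rightarrow> (real \<Rightarrow> real) set" where
  "Cf x N f = {g. continuous_on (Ival x N) g \<and> g (x 0) = f (x 0) \<and> g (x N) = f (x N)}"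

definition fractal :: "(nat \<Rightarrow> real) \<Rightarrow> nat \<Rightarrow> (real \<Rightarrow> real) \<Rightarrow> (nat \<Rightarrow> nat \<Rightarrow> real \<Rightarrow> real)
                   \<Rightarrow> (nat \<Rightarrow> real \<Rightarrow> real) \<Rightarrow> real \<Rightarrow> real" where
  "fractal x N f \<alpha> b = (THE \<phi>. (\<forall>g \<in> Cf x N f.
       uniform_limit (Ival x N) (\<lambda>m. Tcomp x N f \<alpha> b m g) \<phi> sequentially)
     \<and> (\<forall>t. t \<notin> Ival x N \<longrightarrow> \<phi> t = 0))"

definition Aset :: "(nat \<Rightarrow> real) \<Rightarrow> nat \<Rightarrow> (real \<Rightarrow> real) \<Rightarrow> (nat \<Rightarrow> real \<Rightarrow> real) set" where
  "Aset x N f = {b. (\<forall>r\<ge>1. continuous_on (Ival x N) (b r) \<and> b r (x 0) = f (x 0)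
                        \<and> b r (x N) = f (x N))
                  \<and> (\<exists>M. \<forall>r\<ge>1. \<forall>t\<in>Ival x N. \<bar>b r t\<bar> \<le> M)}"

definition seqdist :: "(nat \<Rightarrow> real) \<Rightarrow> nat \<Rightarrow> (nat \<Rightarrow> real \<Rightarrow> real) \<Rightarrow> (nat \<Rightarrow> real \<Rightarrow> real) \<Rightarrow> real" where
  "seqdist x N b c = (SUP r\<in>{1..}. SUP t\<in>Ival x N. \<bar>b r t - c r t\<bar>)"

end

theory Submission
  imports Defs
begin

text \<open>Let \<open>s < 1\<close> bound the scaling functions. One operator satisfies
  \<open>|T\<^sub>b g - T\<^sub>c h| \<le> s (\<parallel>g - h\<parallel> + \<parallel>b\<^sub>r - c\<^sub>r\<parallel>)\<close>; iterating,
  \<open>|T\<^sub>b\<^sup>m g - T\<^sub>c\<^sup>m h| \<le> s\<^sup>m \<parallel>g - h\<parallel> + (s + \<dots> + s\<^sup>m) \<parallel>b - c\<parallel>\<close>.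
  For \<open>b = c\<close> this makes the iterates uniformly Cauchy with a limit independent of the
  starting function, so the fractal function is their uniform limit; for \<open>g = h = f\<close>,
  letting \<open>m \<rightarrow> \<infinity>\<close> gives \<open>|f\<^sub>b - f\<^sub>c| \<le> s / (1 - s) \<parallel>b - c\<parallel>\<close>.\<close>

lemma uniformly_Cauchy_onI_vanishing_bound:
  fixes G :: "nat \<Rightarrow> 'a \<Rightarrow> 'b::metric_space"
  assumes bound: "\<And>m n t. m \<le> n \<Longrightarrow> t \<in> S \<Longrightarrow> dist (G m t) (G n t) \<le> e m"
    and vanish: "e \<longlonglongrightarrow> 0"
  shows "uniformly_Cauchy_on S G"
proof (rule uniformly_Cauchy_onI')
  fix \<epsilon> :: real assume "\<epsilon> > 0"
  with vanish have "eventually (\<lambda>m. e m < \<epsilon>) sequentially"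
    by (rule order_tendstoD(2))
  then obtain M where M: "\<And>m. m \<ge> M \<Longrightarrow> e m < \<epsilon>"
    by (auto simp: eventually_sequentially)
  show "\<exists>M. \<forall>t\<in>S. \<forall>m\<ge>M. \<forall>n>m. dist (G m t) (G n t) < \<epsilon>"
  proof (intro exI ballI allI impI)
    fix t m n assume "t \<in> S" "M \<le> m" "m < n"
    then have "dist (G m t) (G n t) \<le> e m" by (intro bound) auto
    also have "e m < \<epsilon>" using M \<open>M \<le> m\<close> .
    finally show "dist (G m t) (G n t) < \<epsilon>" .
  qed
qed

lemma uniform_limit_vanishing_dist:
  fixes G H :: "nat \<Rightarrow> 'a \<Rightarrow> 'b::metric_space"
  assumes lim: "uniform_limit S H \<phi> sequentially"
    and bound: "\<And>m t. t \<in> S \<Longrightarrow> dist (G m t) (H m t) \<le> e m"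
    and vanish: "e \<longlonglongrightarrow> 0"
  shows "uniform_limit S G \<phi> sequentially"
proof (rule uniform_limitI)
  fix \<epsilon> :: real assume "\<epsilon> > 0"
  then have "\<epsilon> / 2 > 0" by simp
  from uniform_limitD[OF lim this] order_tendstoD(2)[OF vanish this]
  show "\<forall>\<^sub>F m in sequentially. \<forall>t\<in>S. dist (G m t) (\<phi> t) < \<epsilon>"
  proof eventually_elim
    case (elim m)
    show ?case
    proof
      fix t assume "t \<in> S"
      then have "dist (G m t) (H m t) < \<epsilon> / 2" "dist (H m t) (\<phi> t) < \<epsilon> / 2"
        using bound[of t m] elim by auto
      then show "dist (G m t) (\<phi> t) < \<epsilon>"
        using dist_triangle[of "G m t" "\<phi> t" "H m t"] by linarith
    qed
  qed
qed

lemma continuous_on_Ival_bounded: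
  fixes g :: "real \<Rightarrow> real"
  assumes "continuous_on (Ival x N) g"
  obtains M where "\<And>t. t \<in> Ival x N \<Longrightarrow> \<bar>g t\<bar> \<le> M"
proof -
  have "compact (Ival x N)" by (simp add: Ival_def)
  from continuous_on_compact_bound[OF this assms] obtain B
    where "\<And>t. t \<in> Ival x N \<Longrightarrow> \<bar>g t\<bar> \<le> B" by auto
  then show ?thesis by (rule that)
qed

lemma Qmap_mem_Ival:
  assumes "x (i - 1) < x i" "x 0 \<le> x N" "x (i - 1) \<le> t" "t \<le> x i"
  shows "Qmap x N i t \<in> Ival x N"
proof -
  have "Qmap x N i t - x 0 = (x N - x 0) * (t - x (i - 1)) / (x i - x (i - 1))"
    "x N - Qmap x N i t = (x N - x 0) * (x i - t) / (x i - x (i - 1))"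
    using assms(1) by (simp_all add: Qmap_def field_simps)
  moreover have "0 \<le> (x N - x 0) * (t - x (i - 1)) / (x i - x (i - 1))"
    "0 \<le> (x N - x 0) * (x i - t) / (x i - x (i - 1))"
    using assms by simp_all
  ultimately show ?thesis by (simp add: Ival_def)
qed

lemma sub_index_bounds:
  assumes part: "is_partition x N" and t: "t \<in> Ival x N"
  shows "sub_index x t \<in> {1..N}" "x (sub_index x t - 1) \<le> t" "t \<le> x (sub_index x t)"
proof -
  let ?P = "\<lambda>i. 1 \<le> i \<and> t \<le> x i"
  have PN: "?P N" using part t by (simp add: is_partition_def Ival_def)
  show "t \<le> x (sub_index x t)" "sub_index x t \<in> {1..N}"
    using LeastI[of ?P, OF PN] Least_le[of ?P, OF PN] by (simp_all add: sub_index_def)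
  show "x (sub_index x t - 1) \<le> t"
  proof (cases "sub_index x t = 1")
    case True
    then show ?thesis using t by (simp add: Ival_def)
  next
    case False
    then have "sub_index x t - 1 < (LEAST i. ?P i)" "1 \<le> sub_index x t - 1"
      using \<open>sub_index x t \<in> {1..N}\<close> by (auto simp: sub_index_def)
    then show ?thesis using not_less_Least by fastforce
  qed
qed

lemma Qmap_sub_index_mem_Ival:
  assumes part: "is_partition x N" and t: "t \<in> Ival x N"
  shows "Qmap x N (sub_index x t) t \<in> Ival x N"
proof (rule Qmap_mem_Ival)
  have "sub_index x t - 1 < N" "Suc (sub_index x t - 1) = sub_index x t"
    using sub_index_bounds(1)[OF assms] by auto
  then show "x (sub_index x t - 1) < x (sub_index x t)"
    using part by (metis is_partition_def)
  show "x 0 \<le> x N" using t by (simp add: Ival_def)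
qed (use sub_index_bounds[OF assms] in auto)

text \<open>The limit function is unique because \<open>f\<close> itself is an admissible starting function.\<close>

lemma fractal_eqI:
  assumes f: "f \<in> Cf x N f"
    and lim: "\<And>g. g \<in> Cf x N f \<Longrightarrow>
                uniform_limit (Ival x N) (\<lambda>m. Tcomp x N f \<alpha> b m g) \<phi> sequentially"
    and outside: "\<And>t. t \<notin> Ival x N \<Longrightarrow> \<phi> t = 0"
  shows "fractal x N f \<alpha> b = \<phi>"
  unfolding fractal_def
proof (rule the_equality)
  fix \<psi>
  assume \<psi>: "(\<forall>g\<in>Cf x N f. uniform_limit (Ival x N) (\<lambda>m. Tcomp x N f \<alpha> b m g) \<psi> sequentially)
    \<and> (\<forall>t. t \<notin> Ival x N \<longrightarrow> \<psi> t = 0)"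
  show "\<psi> = \<phi>"
  proof
    fix t show "\<psi> t = \<phi> t"
    proof (cases "t \<in> Ival x N")
      case True
      with \<psi> lim[OF f] f show ?thesis
        by (meson LIMSEQ_unique tendsto_uniform_limitI)
    qed (use \<psi> outside in auto)
  qed
qed (use lim outside in auto)

lemma abs_le_seqdist:
  assumes b: "b \<in> Aset x N f" and c: "c \<in> Aset x N f" and r: "r \<ge> 1" and t: "t \<in> Ival x N"
  shows "\<bar>b r t - c r t\<bar> \<le> seqdist x N b c"
proof -
  obtain B C where B: "\<forall>r\<ge>1. \<forall>t\<in>Ival x N. \<bar>b r t\<bar> \<le> B" and C: "\<forall>r\<ge>1. \<forall>t\<in>Ival x N. \<bar>c r t\<bar> \<le> C"
    using b c unfolding Aset_def by blast
  have bound: "\<bar>b r' t' - c r' t'\<bar> \<le> B + C" if "r' \<ge> 1" "t' \<in> Ival x N" for r' t'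
  proof -
    have "\<bar>b r' t'\<bar> \<le> B" "\<bar>c r' t'\<bar> \<le> C" using B C that by auto
    then show ?thesis by linarith
  qed
  define row where "row r' = (SUP t'\<in>Ival x N. \<bar>b r' t' - c r' t'\<bar>)" for r'
  have "\<bar>b r t - c r t\<bar> \<le> row r"
    unfolding row_def using bound r t by (intro cSUP_upper bdd_aboveI2) auto
  also have "row r \<le> seqdist x N b c"
  proof -
    have "row r' \<le> B + C" if "r' \<in> {1..}" for r'
      unfolding row_def using t that bound by (intro cSUP_least) auto
    then show ?thesis
      unfolding seqdist_def row_def[symmetric] using r by (intro cSUP_upper bdd_aboveI2) auto
  qed
  finally show ?thesis .
qed

locale contractive_scaling =
  fixes x :: "nat \<Rightarrow> real" and N :: nat and \<alpha> :: "nat \<Rightarrow> nat \<Rightarrow> real \<Rightarrow> real" and s :: real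
  assumes partition: "is_partition x N"
    and scaling_le: "\<And>r i t. 1 \<le> r \<Longrightarrow> i \<in> {1..N} \<Longrightarrow> t \<in> Ival x N \<Longrightarrow> \<bar>\<alpha> i r t\<bar> \<le> s"
    and s_nonneg: "0 \<le> s" and s_less_1: "s < 1"
begin

definition Top_iter :: "(real \<Rightarrow> real) \<Rightarrow> (nat \<Rightarrow> real \<Rightarrow> real) \<Rightarrow> nat \<Rightarrow> nat
                          \<Rightarrow> (real \<Rightarrow> real) \<Rightarrow> real \<Rightarrow> real" where
  "Top_iter f b k n g = foldr (\<lambda>r. Top x N f \<alpha> b r) [k..<k + n] g"

lemma Top_iter_0 [simp]: "Top_iter f b k 0 g = g"
  by (simp add: Top_iter_def)

lemma Top_iter_Suc: "Top_iter f b k (Suc n) g = Top x N f \<alpha> b k (Top_iter f b (Suc k) n g)"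
proof -
  have "[k..<k + Suc n] = k # [Suc k..<Suc k + n]"
    by (simp add: upt_conv_Cons)
  then show ?thesis by (simp only: Top_iter_def foldr.simps o_apply)
qed

lemma Top_iter_add: "Top_iter f b k (n + p) g = Top_iter f b k n (Top_iter f b (k + n) p g)"
proof -
  have "[k..<k + (n + p)] = [k..<k + n] @ [k + n..<k + n + p]"
    by (metis upt_add_eq_append le_add1 add.assoc)
  then show ?thesis by (simp only: Top_iter_def foldr_append o_apply)
qed

lemma Tcomp_eq_Top_iter: "Tcomp x N f \<alpha> b m g = Top_iter f b 1 m g"
  by (simp add: Tcomp_def Top_iter_def)

lemma Top_eq_pullback:
  assumes "t \<in> Ival x N"
  shows "\<exists>i\<in>{1..N}. \<exists>q\<in>Ival x N. \<forall>b r g.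
           Top x N f \<alpha> b r g t = f t + \<alpha> i r q * (g q - b r q)"
  using sub_index_bounds(1)[OF partition assms] Qmap_sub_index_mem_Ival[OF partition assms]
  by (auto simp: Top_def Let_def)

lemma dist_Top_le:
  assumes r: "r \<ge> 1" and t: "t \<in> Ival x N"
    and gh: "\<And>u. u \<in> Ival x N \<Longrightarrow> \<bar>g u - h u\<bar> \<le> D"
    and bc: "\<And>u. u \<in> Ival x N \<Longrightarrow> \<bar>b r u - c r u\<bar> \<le> d"
  shows "\<bar>Top x N f \<alpha> b r g t - Top x N f \<alpha> c r h t\<bar> \<le> s * (D + d)"
proof -
  obtain i q where iq: "i \<in> {1..N}" "q \<in> Ival x N"
    and T: "\<forall>b r g. Top x N f \<alpha> b r g t = f t + \<alpha> i r q * (g q - b r q)"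
    using Top_eq_pullback[OF t, of f] by blast
  have "\<bar>Top x N f \<alpha> b r g t - Top x N f \<alpha> c r h t\<bar>
      = \<bar>\<alpha> i r q\<bar> * \<bar>(g q - h q) - (b r q - c r q)\<bar>"
    by (simp add: T abs_mult[symmetric] algebra_simps)
  also have "\<dots> \<le> s * (D + d)"
  proof (rule mult_mono)
    show "\<bar>(g q - h q) - (b r q - c r q)\<bar> \<le> D + d"
      using abs_triangle_ineq4[of "g q - h q" "b r q - c r q"] gh[OF iq(2)] bc[OF iq(2)]
      by linarith
  qed (use scaling_le[OF r iq] s_nonneg in auto)
  finally show ?thesis .
qed

lemma abs_Top_le:
  assumes r: "r \<ge> 1" and t: "t \<in> Ival x N"
    and f: "\<And>u. u \<in> Ival x N \<Longrightarrow> \<bar>f u\<bar> \<le> F"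
    and g: "\<And>u. u \<in> Ival x N \<Longrightarrow> \<bar>g u\<bar> \<le> M"
    and b: "\<And>u. u \<in> Ival x N \<Longrightarrow> \<bar>b r u\<bar> \<le> B"
  shows "\<bar>Top x N f \<alpha> b r g t\<bar> \<le> F + s * (M + B)"
proof -
  obtain i q where iq: "i \<in> {1..N}" "q \<in> Ival x N"
    and T: "\<forall>b r g. Top x N f \<alpha> b r g t = f t + \<alpha> i r q * (g q - b r q)"
    using Top_eq_pullback[OF t, of f] by blast
  have "\<bar>\<alpha> i r q\<bar> * \<bar>g q - b r q\<bar> \<le> s * (M + B)"
  proof (rule mult_mono)
    show "\<bar>g q - b r q\<bar> \<le> M + B"
      using abs_triangle_ineq4[of "g q" "b r q"] g[OF iq(2)] b[OF iq(2)] by linarith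
  qed (use scaling_le[OF r iq] s_nonneg in auto)
  then show ?thesis
    using f[OF t] abs_triangle_ineq[of "f t" "\<alpha> i r q * (g q - b r q)"]
    by (simp add: T abs_mult)
qed

lemma dist_Top_iter_le:
  assumes k: "k \<ge> 1" and t: "t \<in> Ival x N"
    and gh: "\<And>u. u \<in> Ival x N \<Longrightarrow> \<bar>g u - h u\<bar> \<le> D"
    and bc: "\<And>r u. r \<ge> 1 \<Longrightarrow> u \<in> Ival x N \<Longrightarrow> \<bar>b r u - c r u\<bar> \<le> d"
    and d: "0 \<le> d"
  shows "\<bar>Top_iter f b k n g t - Top_iter f c k n h t\<bar> \<le> s ^ n * D + s / (1 - s) * d"
  using k t
proof (induction n arbitrary: k t)
  case 0
  then show ?case using gh d s_nonneg s_less_1 by (simp add: add_increasing2)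
next
  case (Suc n)
  have "\<bar>Top_iter f b k (Suc n) g t - Top_iter f c k (Suc n) h t\<bar>
      \<le> s * ((s ^ n * D + s / (1 - s) * d) + d)"
    unfolding Top_iter_Suc using Suc by (intro dist_Top_le bc) auto
  also have "\<dots> = s ^ Suc n * D + s / (1 - s) * d"
    using s_less_1 by (simp add: field_simps)
  finally show ?case .
qed

lemma abs_Top_iter_le:
  assumes k: "k \<ge> 1" and t: "t \<in> Ival x N"
    and f: "\<And>u. u \<in> Ival x N \<Longrightarrow> \<bar>f u\<bar> \<le> F"
    and g: "\<And>u. u \<in> Ival x N \<Longrightarrow> \<bar>g u\<bar> \<le> M"
    and b: "\<And>r u. r \<ge> 1 \<Longrightarrow> u \<in> Ival x N \<Longrightarrow> \<bar>b r u\<bar> \<le> B"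
    and M: "F + s * B \<le> (1 - s) * M"
  shows "\<bar>Top_iter f b k n g t\<bar> \<le> M"
  using k t
proof (induction n arbitrary: k t)
  case (Suc n)
  have "\<bar>Top_iter f b k (Suc n) g t\<bar> \<le> F + s * (M + B)"
    unfolding Top_iter_Suc using Suc by (intro abs_Top_le f b) auto
  with M show ?case by (simp add: algebra_simps)
qed (use g in simp)

lemma dist_Tcomp_le:
  assumes t: "t \<in> Ival x N" and gh: "\<And>u. u \<in> Ival x N \<Longrightarrow> \<bar>g u - h u\<bar> \<le> D"
  shows "\<bar>Tcomp x N f \<alpha> b m g t - Tcomp x N f \<alpha> b m h t\<bar> \<le> s ^ m * D"
  using dist_Top_iter_le[OF _ t gh, where b=b and c=b and d=0 and f=f and n=m and k=1]
  by (simp add: Tcomp_eq_Top_iter)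

lemma uniformly_Cauchy_Tcomp:
  assumes f: "\<And>u. u \<in> Ival x N \<Longrightarrow> \<bar>f u\<bar> \<le> F"
    and b: "\<And>r u. r \<ge> 1 \<Longrightarrow> u \<in> Ival x N \<Longrightarrow> \<bar>b r u\<bar> \<le> B"
    and g: "\<And>u. u \<in> Ival x N \<Longrightarrow> \<bar>g u\<bar> \<le> G"
  shows "uniformly_Cauchy_on (Ival x N) (\<lambda>m. Tcomp x N f \<alpha> b m g)"
proof -
  txt \<open>\<open>(F + s B) / (1 - s)\<close> is the fixed point of \<open>M \<mapsto> F + s (M + B)\<close>, so every larger
    \<open>M\<close> is a bound preserved by all the operators.\<close>
  define M where "M = max G ((F + s * B) / (1 - s))"
  have gM: "\<bar>g u\<bar> \<le> M" if "u \<in> Ival x N" for u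
    using g[OF that] by (simp add: M_def)
  have "(F + s * B) / (1 - s) \<le> M" by (simp add: M_def)
  then have FBM: "F + s * B \<le> (1 - s) * M"
    using s_less_1 by (simp add: pos_divide_le_eq mult.commute)
  show ?thesis
  proof (rule uniformly_Cauchy_onI_vanishing_bound)
    fix m n :: nat and t assume mn: "m \<le> n" and t: "t \<in> Ival x N"
    define tail where "tail = Top_iter f b (1 + m) (n - m) g"
    have "\<bar>tail u - g u\<bar> \<le> 2 * M" if "u \<in> Ival x N" for u
      using abs_Top_iter_le[where k="1 + m" and n="n - m" and f=f and b=b and g=g,
          OF _ that f gM b FBM] gM[OF that]
      unfolding tail_def by linarith
    then have "\<bar>Tcomp x N f \<alpha> b m tail t - Tcomp x N f \<alpha> b m g t\<bar> \<le> s ^ m * (2 * M)"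
      by (rule dist_Tcomp_le[OF t])
    moreover have "Tcomp x N f \<alpha> b n g = Tcomp x N f \<alpha> b m tail"
      using Top_iter_add[of f b 1 m "n - m" g] mn by (simp add: Tcomp_eq_Top_iter tail_def)
    ultimately show "dist (Tcomp x N f \<alpha> b m g t) (Tcomp x N f \<alpha> b n g t) \<le> s ^ m * (2 * M)"
      by (simp add: dist_real_def abs_minus_commute)
  next
    show "(\<lambda>m. s ^ m * (2 * M)) \<longlonglongrightarrow> 0"
      using s_nonneg s_less_1 by (intro tendsto_mult_left_zero LIMSEQ_power_zero) simp
  qed
qed

lemma uniform_limit_fractal:
  assumes f: "continuous_on (Ival x N) f"
    and b: "\<And>r u. r \<ge> 1 \<Longrightarrow> u \<in> Ival x N \<Longrightarrow> \<bar>b r u\<bar> \<le> B"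
    and g: "g \<in> Cf x N f"
  shows "uniform_limit (Ival x N) (\<lambda>m. Tcomp x N f \<alpha> b m g) (fractal x N f \<alpha> b) sequentially"
proof -
  obtain F where F: "\<And>u. u \<in> Ival x N \<Longrightarrow> \<bar>f u\<bar> \<le> F"
    using continuous_on_Ival_bounded[OF f] by metis
  have "uniformly_convergent_on (Ival x N) (\<lambda>m. Tcomp x N f \<alpha> b m f)"
    using uniformly_Cauchy_Tcomp[OF F b F] by (rule Cauchy_uniformly_convergent)
  then obtain \<phi> where \<phi>: "uniform_limit (Ival x N) (\<lambda>m. Tcomp x N f \<alpha> b m f) \<phi> sequentially"
    unfolding uniformly_convergent_on_def by blast
  define \<phi>\<^sub>0 where "\<phi>\<^sub>0 t = (if t \<in> Ival x N then \<phi> t else 0)" for t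
  have lim_f: "uniform_limit (Ival x N) (\<lambda>m. Tcomp x N f \<alpha> b m f) \<phi>\<^sub>0 sequentially"
    using \<phi> by (rule uniform_limit_cong'[THEN iffD1, rotated 2]) (simp_all add: \<phi>\<^sub>0_def)
  have lim: "uniform_limit (Ival x N) (\<lambda>m. Tcomp x N f \<alpha> b m h) \<phi>\<^sub>0 sequentially"
    if "h \<in> Cf x N f" for h
  proof -
    have "continuous_on (Ival x N) h" using that by (simp add: Cf_def)
    then obtain H where H: "\<And>u. u \<in> Ival x N \<Longrightarrow> \<bar>h u\<bar> \<le> H"
      using continuous_on_Ival_bounded by metis
    have hf: "\<bar>h u - f u\<bar> \<le> H + F" if "u \<in> Ival x N" for u
      using H[OF that] F[OF that] by linarith
    show ?thesis
    proof (rule uniform_limit_vanishing_dist[OF lim_f])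
      show "dist (Tcomp x N f \<alpha> b m h t) (Tcomp x N f \<alpha> b m f t) \<le> s ^ m * (H + F)"
        if "t \<in> Ival x N" for m t
        using dist_Tcomp_le[OF that hf] by (simp add: dist_real_def)
      show "(\<lambda>m. s ^ m * (H + F)) \<longlonglongrightarrow> 0"
        using s_nonneg s_less_1 by (intro tendsto_mult_left_zero LIMSEQ_power_zero) simp
    qed
  qed
  have "fractal x N f \<alpha> b = \<phi>\<^sub>0"
  proof (rule fractal_eqI)
    show "f \<in> Cf x N f" using f by (simp add: Cf_def)
  qed (simp_all add: lim \<phi>\<^sub>0_def)
  with lim g show ?thesis by simp
qed

lemma dist_fractal_le:
  assumes f: "continuous_on (Ival x N) f"
    and b: "\<And>r u. r \<ge> 1 \<Longrightarrow> u \<in> Ival x N \<Longrightarrow> \<bar>b r u\<bar> \<le> B"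
    and c: "\<And>r u. r \<ge> 1 \<Longrightarrow> u \<in> Ival x N \<Longrightarrow> \<bar>c r u\<bar> \<le> C"
    and bc: "\<And>r u. r \<ge> 1 \<Longrightarrow> u \<in> Ival x N \<Longrightarrow> \<bar>b r u - c r u\<bar> \<le> d"
    and t: "t \<in> Ival x N"
  shows "\<bar>fractal x N f \<alpha> b t - fractal x N f \<alpha> c t\<bar> \<le> s / (1 - s) * d"
proof (rule LIMSEQ_le_const2)
  have f_Cf: "f \<in> Cf x N f" using f by (simp add: Cf_def)
  show "(\<lambda>m. \<bar>Tcomp x N f \<alpha> b m f t - Tcomp x N f \<alpha> c m f t\<bar>)
          \<longlonglongrightarrow> \<bar>fractal x N f \<alpha> b t - fractal x N f \<alpha> c t\<bar>"
    using uniform_limit_fractal[where b=b, OF f b f_Cf] uniform_limit_fractal[where b=c, OF f c f_Cf] t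
    by (intro tendsto_rabs tendsto_diff) (auto intro: tendsto_uniform_limitI)
  have d: "0 \<le> d" using bc[OF _ t, of 1] by simp
  show "\<exists>M. \<forall>m\<ge>M. \<bar>Tcomp x N f \<alpha> b m f t - Tcomp x N f \<alpha> c m f t\<bar> \<le> s / (1 - s) * d"
    using dist_Top_iter_le[where g=f and h=f and D=0 and k=1, OF _ t _ bc d]
    by (simp add: Tcomp_eq_Top_iter)
qed

end

theorem mainTheorem10:
  fixes x :: "nat \<Rightarrow> real" and N :: nat and f :: "real \<Rightarrow> real"
    and \<alpha> :: "nat \<Rightarrow> nat \<Rightarrow> real \<Rightarrow> real"
  assumes part: "is_partition x N"
    and f_cont: "continuous_on (Ival x N) f"
    and \<alpha>_cont: "\<forall>r\<ge>1. \<forall>i\<in>{1..N}. continuous_on (Ival x N) (\<alpha> i r)"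
    and \<alpha>_norm: "\<exists>s<1. \<forall>r\<ge>1. \<forall>i\<in>{1..N}. \<forall>t\<in>Ival x N. \<bar>\<alpha> i r t\<bar> \<le> s"
  shows "\<exists>L. \<forall>b\<in>Aset x N f. \<forall>c\<in>Aset x N f. \<forall>t\<in>Ival x N.
           \<bar>fractal x N f \<alpha> b t - fractal x N f \<alpha> c t\<bar> \<le> L * seqdist x N b c"
proof -
  obtain s where s: "s < 1" "\<forall>r\<ge>1. \<forall>i\<in>{1..N}. \<forall>t\<in>Ival x N. \<bar>\<alpha> i r t\<bar> \<le> s"
    using \<alpha>_norm by blast
  interpret contractive_scaling x N \<alpha> "max s 0"
    using part s by unfold_locales (auto intro: le_max_iff_disj[THEN iffD2])
  show ?thesis
  proof (intro exI ballI)
    fix b c t assume b: "b \<in> Aset x N f" and c: "c \<in> Aset x N f" and t: "t \<in> Ival x N"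
    obtain B C where "\<forall>r\<ge>1. \<forall>u\<in>Ival x N. \<bar>b r u\<bar> \<le> B" "\<forall>r\<ge>1. \<forall>u\<in>Ival x N. \<bar>c r u\<bar> \<le> C"
      using b c unfolding Aset_def by blast
    moreover have "\<And>r u. r \<ge> 1 \<Longrightarrow> u \<in> Ival x N \<Longrightarrow> \<bar>b r u - c r u\<bar> \<le> seqdist x N b c"
      using abs_le_seqdist[OF b c] .
    ultimately show "\<bar>fractal x N f \<alpha> b t - fractal x N f \<alpha> c t\<bar>
        \<le> max s 0 / (1 - max s 0) * seqdist x N b c"
      using dist_fractal_le[where b=b and c=c and B=B and C=C, OF f_cont _ _ _ t] by blast
  qed
qed

end
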